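(* Let $G$ be a complete graph on $n$ vertices and let $f_0,f_t$ be token-placements of $G$ such that $D(f_0,f_t)$ has a cycle cover. Let $|\mathcal{C}^*(f_0,f_t)|$ denote the maximum number of cycles in a cycle cover of $D(f_0,f_t)$. Then $\mathrm{OPT}(f_0,f_t)\ge n-|\mathcal{C}^*(f_0,f_t)|$. (Together with the upper bound, $\mathrm{OPT}(f_0,f_t)=n-|\mathcal{C}^*(f_0,f_t)|$.)
   Context: A token-placement of $G=(V,E)$ with colors $C=\{1,\dots,c\}$ is a surjective map $f\colon V\to C$. Two distinct token-placements $f,f'$ are adjacent if there is an edge $uv\in E$ with $f'(u)=f(v)$, $f'(v)=f(u)$ and $f'(w)=f(w)$ for all other $w$. A swapping sequence between $f$ and $f'$ is a sequence $f_1=f,\dots,f_h=f'$ of token-placements with consecutive members adjacent; its length is $h-1$; $\mathrm{OPT}(f,f')$ is the minimum length of such a sequence. The destination graph $D(f,f_t)$ is the directed graph on vertex set $V$ with an arc $(u,v)$ (for all $u,v\in V$, including $u=v$) whenever $f(u)=f_t(v)$. A (vertex-disjoint) cycle cover of a directed graph is a set of vertex-disjoint directed cycles (self-loops count as cycles of length 1) covering every vertex. *)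

theory Defs
  imports Main "HOL-Library.Extended_Nat"
begin

text \<open>Graph: finite vertex set V, edge set E given as a set of ordered pairs
(an undirected edge uv is represented by both (u,v) and (v,u)).\<close>

definition complete_graph :: "'a set \<Rightarrow> ('a \<times> 'a) set \<Rightarrow> bool" where
  "complete_graph V E \<longleftrightarrow> E = {(u,v). u \<in> V \<and> v \<in> V \<and> u \<noteq> v}"

text \<open>Token placement with colours {1..c}: surjective map V \<rightarrow> {1..c};
outside V the map is fixed to 0 (convention, functions are extensional).\<close>

definition token_placement :: "'a set \<Rightarrow> nat \<Rightarrow> ('a \<Rightarrow> nat) \<Rightarrow> bool" where
  "token_placement V c f \<longleftrightarrow> f ` V = {1..c} \<and> (\<forall>w. w \<notin> V \<longrightarrow> f w = 0)"

definition tp_adjacent :: "('a \<times> 'a) set \<Rightarrow> ('a \<Rightarrow> nat) \<Rightarrow> ('a \<Rightarrow> nat) \<Rightarrow> bool" where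
  "tp_adjacent E f f' \<longleftrightarrow> f \<noteq> f' \<and>
     (\<exists>u v. (u, v) \<in> E \<and> f' u = f v \<and> f' v = f u \<and> (\<forall>w. w \<noteq> u \<and> w \<noteq> v \<longrightarrow> f' w = f w))"

definition swapping_sequence ::
  "'a set \<Rightarrow> ('a \<times> 'a) set \<Rightarrow> nat \<Rightarrow> ('a \<Rightarrow> nat) \<Rightarrow> ('a \<Rightarrow> nat) \<Rightarrow> ('a \<Rightarrow> nat) list \<Rightarrow> bool" where
  "swapping_sequence V E c f f' fs \<longleftrightarrow> fs \<noteq> [] \<and> hd fs = f \<and> last fs = f' \<and>
     (\<forall>g \<in> set fs. token_placement V c g) \<and>
     (\<forall>i. Suc i < length fs \<longrightarrow> tp_adjacent E (fs ! i) (fs ! Suc i))"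

definition OPT :: "'a set \<Rightarrow> ('a \<times> 'a) set \<Rightarrow> nat \<Rightarrow> ('a \<Rightarrow> nat) \<Rightarrow> ('a \<Rightarrow> nat) \<Rightarrow> enat" where
  "OPT V E c f f' = (INF fs \<in> {fs. swapping_sequence V E c f f' fs}. enat (length fs - 1))"

definition dest_graph :: "'a set \<Rightarrow> ('a \<Rightarrow> nat) \<Rightarrow> ('a \<Rightarrow> nat) \<Rightarrow> ('a \<times> 'a) set" where
  "dest_graph V f ft = {(u, v). u \<in> V \<and> v \<in> V \<and> f u = ft v}"

text \<open>A directed cycle is represented by its arc set: the arcs
x_0 x_1, ..., x_{k-1} x_0 of a nonempty list of distinct vertices
(k = 1 gives a self-loop).\<close>

definition cycle_arcs :: "'a list \<Rightarrow> ('a \<times> 'a) set" where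
  "cycle_arcs xs = {(xs ! i, xs ! ((i + 1) mod length xs)) | i. i < length xs}"

definition is_dcycle :: "('a \<times> 'a) set \<Rightarrow> ('a \<times> 'a) set \<Rightarrow> bool" where
  "is_dcycle A C \<longleftrightarrow> (\<exists>xs. xs \<noteq> [] \<and> distinct xs \<and> C = cycle_arcs xs \<and> C \<subseteq> A)"

definition cycle_verts :: "('a \<times> 'a) set \<Rightarrow> 'a set" where
  "cycle_verts C = fst ` C"

definition is_cycle_cover :: "'a set \<Rightarrow> ('a \<times> 'a) set \<Rightarrow> ('a \<times> 'a) set set \<Rightarrow> bool" where
  "is_cycle_cover V A CC \<longleftrightarrow> (\<forall>C \<in> CC. is_dcycle A C) \<and>
     (\<forall>C \<in> CC. \<forall>C' \<in> CC. C \<noteq> C' \<longrightarrow> cycle_verts C \<inter> cycle_verts C' = {}) \<and>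
     (\<Union>C \<in> CC. cycle_verts C) = V"

definition max_cycles :: "'a set \<Rightarrow> ('a \<Rightarrow> nat) \<Rightarrow> ('a \<Rightarrow> nat) \<Rightarrow> nat" where
  "max_cycles V f ft = Max {card CC | CC. is_cycle_cover V (dest_graph V f ft) CC}"

end

theory Submission
  imports Defs "HOL-Combinatorics.Orbits" "HOL-Library.Disjoint_Sets"
begin

text \<open>Swapping the tokens on an edge uv composes the placement with the transposition of u and v.
  Reading a swapping sequence of length L backwards from \<open>f\<^sub>t\<close>, we maintain a permutation p with
  \<open>f\<^sub>0 = f\<^sub>t \<circ> p\<close> together with the partition of V into the components of the swapped edges: every
  swap merges at most two blocks, so there are at least n - L of them, and each block is p-invariant,
  hence a union of cycles of p. Since every arc (x, p x) lies in the destination graph, the cycles of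
  p form a cycle cover with at least n - L cycles.\<close>

definition orbit_arcs :: "('a \<Rightarrow> 'a) \<Rightarrow> 'a \<Rightarrow> ('a \<times> 'a) set" where
  "orbit_arcs p x = (\<lambda>y. (y, p y)) ` orbit p x"

lemma cycle_verts_orbit_arcs [simp]: "cycle_verts (orbit_arcs p x) = orbit p x"
  unfolding cycle_verts_def orbit_arcs_def by (simp add: image_image)

lemma orbit_arcs_eq_cycle_arcs:
  assumes "permutation p"
  obtains xs where "xs \<noteq> []" "distinct xs" "orbit_arcs p x = cycle_arcs xs"
proof
  have self: "x \<in> orbit p x" using assms by (rule permutation_self_in_orbit)
  define k where "k = funpow_dist1 p x x"
  define xs where "xs = map (\<lambda>i. (p ^^ i) x) [0..<k]"
  have period: "(p ^^ k) x = x" unfolding k_def using funpow_dist1_prop[OF self] .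
  have len: "length xs = k" and nth: "\<And>i. i < k \<Longrightarrow> xs ! i = (p ^^ i) x"
    unfolding xs_def by simp_all
  show "xs \<noteq> []" unfolding xs_def k_def by simp
  have "inj_on (\<lambda>i. (p ^^ i) x) {0..<k}"
    unfolding k_def using inj_on_funpow_dist1[OF self] .
  then show "distinct xs" unfolding xs_def by (simp add: distinct_map)
  have succ: "(p ^^ (Suc i mod k)) x = p ((p ^^ i) x)" for i
    using funpow_mod_eq[OF period, of "Suc i"] by simp
  have "cycle_arcs xs = (\<lambda>y. (y, p y)) ` (\<lambda>i. (p ^^ i) x) ` {0..<k}"
    unfolding cycle_arcs_def len using nth by (force simp: succ)
  then show "orbit_arcs p x = cycle_arcs xs"
    unfolding orbit_arcs_def k_def orbit_conv_funpow_dist1[OF self] by simp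
qed

lemma is_cycle_cover_orbit_arcs:
  assumes "finite V" "p permutes V" and arcs: "\<And>x. x \<in> V \<Longrightarrow> (x, p x) \<in> A"
  shows "is_cycle_cover V A (orbit_arcs p ` V)"
proof -
  have perm: "permutation p" using assms(1,2) by (auto simp: permutation_permutes)
  show ?thesis
    unfolding is_cycle_cover_def
  proof (intro conjI ballI impI)
    fix C assume "C \<in> orbit_arcs p ` V"
    then obtain x where x: "x \<in> V" "C = orbit_arcs p x" by blast
    have "C \<subseteq> A"
      using arcs permutes_orbit_subset[OF assms(2) x(1)] by (auto simp: x(2) orbit_arcs_def)
    then show "is_dcycle A C"
      unfolding is_dcycle_def by (metis orbit_arcs_eq_cycle_arcs[OF perm] x(2))
  next
    fix C C' assume "C \<in> orbit_arcs p ` V" "C' \<in> orbit_arcs p ` V" "C \<noteq> C'"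
    then obtain x y where C: "C = orbit_arcs p x" "C' = orbit_arcs p y" "orbit p x \<noteq> orbit p y"
      by (auto simp: orbit_arcs_def)
    have "cyclic_on p (orbit p x)" "cyclic_on p (orbit p y)"
      using cyclic_on_orbit[OF assms(2,1)] by auto
    then show "cycle_verts C \<inter> cycle_verts C' = {}"
      using C by (metis cycle_verts_orbit_arcs disjoint_iff orbit_cyclic_eq3)
  next
    show "(\<Union>C \<in> orbit_arcs p ` V. cycle_verts C) = V"
      using permutes_orbit_subset[OF assms(2)] permutation_self_in_orbit[OF perm] by auto
  qed
qed

lemma orbit_subset_invariant:
  assumes "p ` B \<subseteq> B" "x \<in> B"
  shows "orbit p x \<subseteq> B"
proof
  fix y assume "y \<in> orbit p x"
  then show "y \<in> B" by induction (use assms in auto)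
qed

lemma card_invariant_partition_le_orbit_arcs:
  fixes p :: "'a \<Rightarrow> 'a"
  assumes "finite V" "p permutes V" "partition_on V P" and inv: "\<And>B. B \<in> P \<Longrightarrow> p ` B \<subseteq> B"
  shows "card P \<le> card (orbit_arcs p ` V)"
proof -
  define rep :: "'a set \<Rightarrow> 'a" where "rep B = (SOME x. x \<in> B)" for B
  have rep: "rep B \<in> B" if "B \<in> P" for B
    using that partition_onD3[OF assms(3)] unfolding rep_def by (metis ex_in_conv someI_ex)
  have orbit_rep: "orbit p (rep B) \<subseteq> B" if "B \<in> P" for B
    by (rule orbit_subset_invariant[OF inv[OF that] rep[OF that]])
  have "inj_on (\<lambda>B. orbit_arcs p (rep B)) P"
  proof (rule inj_onI)
    fix B B' assume B: "B \<in> P" "B' \<in> P" and "orbit_arcs p (rep B) = orbit_arcs p (rep B')"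
    then have "orbit p (rep B) = orbit p (rep B')" using cycle_verts_orbit_arcs by metis
    then have "orbit p (rep B) \<subseteq> B \<inter> B'" using orbit_rep[OF B(1)] orbit_rep[OF B(2)] by simp
    then have "B \<inter> B' \<noteq> {}" using orbit_nonempty[of p "rep B"] by blast
    then show "B = B'" using disjointD[OF partition_onD2[OF assms(3)] B] by blast
  qed
  moreover have "(\<lambda>B. orbit_arcs p (rep B)) ` P \<subseteq> orbit_arcs p ` V"
    using rep partition_onD1[OF assms(3)] by blast
  ultimately show ?thesis using assms(1) by (intro card_inj_on_le) auto
qed

lemma finite_cycle_covers:
  assumes "finite V" "A \<subseteq> V \<times> V"
  shows "finite {CC. is_cycle_cover V A CC}"
proof (rule finite_subset)
  have "C \<subseteq> V \<times> V" if "is_cycle_cover V A CC" "C \<in> CC" for CC C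
  proof -
    have "is_dcycle A C" using that unfolding is_cycle_cover_def by simp
    then show ?thesis using assms(2) unfolding is_dcycle_def by blast
  qed
  then show "{CC. is_cycle_cover V A CC} \<subseteq> Pow (Pow (V \<times> V))" by auto
qed (use assms(1) in simp)

lemma card_le_max_cycles:
  assumes "finite V" "is_cycle_cover V (dest_graph V f ft) CC"
  shows "card CC \<le> max_cycles V f ft"
proof -
  have "finite {CC. is_cycle_cover V (dest_graph V f ft) CC}"
    using assms(1) by (rule finite_cycle_covers) (auto simp: dest_graph_def)
  then have "finite {card CC | CC. is_cycle_cover V (dest_graph V f ft) CC}"
    by (simp add: finite_image_set)
  then show ?thesis
    unfolding max_cycles_def by (rule Max_ge) (use assms(2) in blast)
qed

lemma partition_on_merge:
  assumes "partition_on A P" "B \<in> P" "B' \<in> P"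
  shows "partition_on A (insert (B \<union> B') (P - {B, B'}))"
proof (rule partition_onI)
  show "\<Union>(insert (B \<union> B') (P - {B, B'})) = A"
    using partition_onD1[OF assms(1)] assms(2,3) by auto
  show "{} \<notin> insert (B \<union> B') (P - {B, B'})"
    using partition_onD3[OF assms(1)] assms(2) by auto
  fix C C'
  assume "C \<in> insert (B \<union> B') (P - {B, B'})" "C' \<in> insert (B \<union> B') (P - {B, B'})" "C \<noteq> C'"
  then show "disjnt C C'"
    using disjointD[OF partition_onD2[OF assms(1)]] assms(2,3) unfolding disjnt_def by auto
qed

lemma card_partition_merge:
  assumes "partition_on A P" "finite P" "B \<in> P" "B' \<in> P"
  shows "card P \<le> Suc (card (insert (B \<union> B') (P - {B, B'})))"
proof (cases "B = B'")
  case True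
  then show ?thesis using assms(3) by (simp add: insert_absorb)
next
  case False
  have "B \<union> B' \<notin> P - {B, B'}"
    using disjointD[OF partition_onD2[OF assms(1)]] partition_onD3[OF assms(1)] assms(3) by auto
  then show ?thesis using False assms(2-4) by (simp add: card_Diff_subset)
qed

lemma successively_conv_nth:
  "successively R xs \<longleftrightarrow> (\<forall>i. Suc i < length xs \<longrightarrow> R (xs ! i) (xs ! Suc i))"
  by (induction R xs rule: successively.induct) (auto simp: nth_Cons split: nat.splits)

definition swap_certificate :: "'a set \<Rightarrow> ('a \<Rightarrow> 'b) \<Rightarrow> ('a \<Rightarrow> 'b) \<Rightarrow> nat \<Rightarrow> bool" where
  "swap_certificate V f ft L \<longleftrightarrow> (\<exists>P p. partition_on V P \<and> card V \<le> card P + L \<and>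
     p permutes V \<and> (\<forall>x\<in>V. f x = ft (p x)) \<and> (\<forall>B\<in>P. p ` B \<subseteq> B))"

lemma swap_certificate_refl: "finite V \<Longrightarrow> swap_certificate V f f 0"
  unfolding swap_certificate_def
  by (intro exI[of _ "(\<lambda>x. {x}) ` V"] exI[of _ id])
     (auto simp: partition_on_singletons card_image permutes_id)

lemma swap_certificate_transpose:
  assumes "finite V" "swap_certificate V g ft L" "u \<in> V" "v \<in> V"
  shows "swap_certificate V (g \<circ> transpose u v) ft (Suc L)"
proof -
  obtain P p where P: "partition_on V P" "card V \<le> card P + L"
    and p: "p permutes V" "\<forall>x\<in>V. g x = ft (p x)" "\<forall>B\<in>P. p ` B \<subseteq> B"
    using assms(2) unfolding swap_certificate_def by blast
  obtain Bu Bv where B: "Bu \<in> P" "u \<in> Bu" "Bv \<in> P" "v \<in> Bv"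
    using partition_onD1[OF P(1)] assms(3,4) by blast
  define P' where "P' = insert (Bu \<union> Bv) (P - {Bu, Bv})"
  have P': "partition_on V P'" unfolding P'_def using P(1) B(1,3) by (rule partition_on_merge)
  have "card P \<le> Suc (card P')"
    unfolding P'_def using card_partition_merge P(1) finite_elements[OF assms(1) P(1)] B(1,3) .
  then have card: "card V \<le> card P' + Suc L" using P(2) by linarith
  have perm: "p \<circ> transpose u v permutes V"
    using permutes_compose[OF permutes_swap_id[OF assms(3,4)] p(1)] .
  have "(p \<circ> transpose u v) ` C \<subseteq> C" if "C \<in> P'" for C
  proof -
    have "transpose u v ` C \<subseteq> C \<and> p ` C \<subseteq> C"
    proof (cases "C = Bu \<union> Bv")
      case True
      have "p ` Bu \<subseteq> Bu" "p ` Bv \<subseteq> Bv" using p(3) B(1,3) by auto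
      then show ?thesis using True B(2,4) by (auto simp: transpose_def)
    next
      case False
      then have "C \<in> P" "u \<notin> C" "v \<notin> C"
        using that B disjointD[OF partition_onD2[OF P(1)]] unfolding P'_def by auto
      then show ?thesis using p(3) by auto
    qed
    then show ?thesis by (auto simp: image_subset_iff)
  qed
  moreover have "\<forall>x\<in>V. (g \<circ> transpose u v) x = ft ((p \<circ> transpose u v) x)"
    using p(2) assms(3,4) by (auto simp: transpose_def)
  ultimately show ?thesis
    unfolding swap_certificate_def using P' card perm by blast
qed

lemma tp_adjacent_transpose:
  assumes "tp_adjacent E f g"
  obtains u v where "(u, v) \<in> E" "f = g \<circ> transpose u v"
proof -
  obtain u v where "(u, v) \<in> E" "g u = f v" "g v = f u" "\<forall>w. w \<noteq> u \<and> w \<noteq> v \<longrightarrow> g w = f w"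
    using assms unfolding tp_adjacent_def by blast
  then have "f = g \<circ> transpose u v" by (auto simp: transpose_def)
  with \<open>(u, v) \<in> E\<close> show thesis by (rule that)
qed

lemma swap_certificate_successively:
  assumes "finite V" "E \<subseteq> V \<times> V"
  shows "successively (tp_adjacent E) fs \<Longrightarrow> fs \<noteq> [] \<Longrightarrow>
    swap_certificate V (hd fs) (last fs) (length fs - 1)"
proof (induction "tp_adjacent E" fs rule: successively.induct)
  case (2 f)
  then show ?case using swap_certificate_refl[OF assms(1)] by simp
next
  case (3 f g fs)
  then have IH: "swap_certificate V g (last (g # fs)) (length fs)" by simp
  obtain u v where uv: "(u, v) \<in> E" and f: "f = g \<circ> transpose u v"
    using "3.prems"(1) by (auto elim: tp_adjacent_transpose)
  have "u \<in> V" "v \<in> V" using uv assms(2) by auto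
  from swap_certificate_transpose[OF assms(1) IH this] show ?case using f by simp
qed simp

lemma swap_certificate_card_le:
  assumes "finite V" "swap_certificate V f ft L"
  shows "card V \<le> max_cycles V f ft + L"
proof -
  obtain P p where P: "partition_on V P" "card V \<le> card P + L"
    and p: "p permutes V" "\<forall>x\<in>V. f x = ft (p x)" "\<forall>B\<in>P. p ` B \<subseteq> B"
    using assms(2) unfolding swap_certificate_def by blast
  have "(x, p x) \<in> dest_graph V f ft" if "x \<in> V" for x
    using that p(2) permutes_in_image[OF p(1)] by (simp add: dest_graph_def)
  then have "is_cycle_cover V (dest_graph V f ft) (orbit_arcs p ` V)"
    using is_cycle_cover_orbit_arcs[OF assms(1) p(1)] by blast
  then have "card (orbit_arcs p ` V) \<le> max_cycles V f ft"
    using card_le_max_cycles[OF assms(1)] by blast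
  moreover have "card P \<le> card (orbit_arcs p ` V)"
    using card_invariant_partition_le_orbit_arcs[OF assms(1) p(1) P(1)] p(3) by blast
  ultimately show ?thesis using P(2) by linarith
qed

theorem mainTheorem15:
  fixes V :: "'a set" and E :: "('a \<times> 'a) set" and n c :: nat
    and f0 ft :: "'a \<Rightarrow> nat"
  assumes "finite V" and "card V = n"
    and "complete_graph V E"
    and "token_placement V c f0" and "token_placement V c ft"
    and "\<exists>CC. is_cycle_cover V (dest_graph V f0 ft) CC"
  shows "OPT V E c f0 ft \<ge> enat (n - max_cycles V f0 ft)"
  unfolding OPT_def
proof (rule INF_greatest)
  fix fs assume "fs \<in> {fs. swapping_sequence V E c f0 ft fs}"
  then have fs: "fs \<noteq> []" "hd fs = f0" "last fs = ft" "successively (tp_adjacent E) fs"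
    unfolding swapping_sequence_def successively_conv_nth by auto
  have "E \<subseteq> V \<times> V" using assms(3) unfolding complete_graph_def by auto
  then have "swap_certificate V f0 ft (length fs - 1)"
    using swap_certificate_successively[OF assms(1) _ fs(4,1)] fs(2,3) by simp
  then have "n \<le> max_cycles V f0 ft + (length fs - 1)"
    using swap_certificate_card_le[OF assms(1)] assms(2) by blast
  then show "enat (n - max_cycles V f0 ft) \<le> enat (length fs - 1)" by simp
qed

end
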